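(* Let $(W,S)$ be a hyperbolic reflection group in $\mathbb{H}^n$ with a convex polytope $P$ as fundamental domain, and let $R$ be its set of reflections. Then the set $\mathcal{H}_\infty=\{\gamma(\infty)\mid \gamma\subseteq H_r\text{ a geodesic ray},\ r\in R\}$ is dense in $\partial\mathbb{H}^n$.
   Context: $(W,S)$ is a discrete group generated by the set $S$ of reflections across the walls of a Coxeter polyhedron $P$ (a convex polyhedron whose intersecting bounding hyperplanes meet at dihedral angles that are submultiples of $\pi$), with $P$ a strict fundamental domain, and whose Coxeter system does not split as a direct product of spherical and affine reflection groups. A convex polytope (possibly with ideal vertices) is, in the hyperboloid model $\mathbb{H}^n\subseteq\mathbb{R}^{n,1}$, the intersection of $\mathbb{H}^n$ with a convex polyhedral cone contained in $\{v\mid\langle v|v\rangle\le0,\ v_{n+1}>0\}$. $R=\{wsw^{-1}\mid w\in W,s\in S\}$ and $H_r$ is the hyperplane fixed by $r$. $\partial\mathbb{H}^n$ is the visual boundary with the cone topology and $\gamma(\infty)$ the endpoint of a ray $\gamma$. *)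

theory Defs
  imports "HOL-Analysis.Analysis"
begin

text \<open>Minkowski space R^{n,1} is modelled as 'a \<times> real with 'a a Euclidean space
  of dimension n; the last coordinate (snd) is v_{n+1}.\<close>

definition lor :: "('a::euclidean_space \<times> real) \<Rightarrow> ('a \<times> real) \<Rightarrow> real" where
  "lor v w = fst v \<bullet> fst w - snd v * snd w"

definition hyp :: "('a::euclidean_space \<times> real) set" where
  "hyp = {v. lor v v = -1 \<and> snd v > 0}"

definition lrefl :: "('a::euclidean_space \<times> real) \<Rightarrow> ('a \<times> real) \<Rightarrow> ('a \<times> real)" where
  "lrefl e v = v - (2 * lor e v / lor e e) *\<^sub>R e"

definition polyhedron :: "('a::euclidean_space \<times> real) set \<Rightarrow> ('a \<times> real) set" where
  "polyhedron E = hyp \<inter> {v. \<forall>e\<in>E. lor e v \<le> 0}"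

text \<open>E is a finite irredundant family of outward wall normals of a convex polytope
  (possibly with ideal vertices): the polyhedral cone lies in the closed future light cone,
  and every hyperplane e^perp carries a genuine facet.\<close>
definition polytope_normals :: "('a::euclidean_space \<times> real) set \<Rightarrow> bool" where
  "polytope_normals E \<longleftrightarrow> finite E \<and> (\<forall>e\<in>E. lor e e > 0)
     \<and> {v. \<forall>e\<in>E. lor e v \<le> 0} - {0} \<subseteq> {v. lor v v \<le> 0 \<and> snd v > 0}
     \<and> (\<forall>e\<in>E. \<exists>p\<in>hyp. lor e p = 0 \<and> (\<forall>e'\<in>E - {e}. lor e' p < 0))"

definition coxeter_angles :: "('a::euclidean_space \<times> real) set \<Rightarrow> bool" where
  "coxeter_angles E \<longleftrightarrow> (\<forall>e\<in>E. \<forall>f\<in>E. e \<noteq> f \<longrightarrow>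
      (\<exists>p\<in>hyp. lor e p = 0 \<and> lor f p = 0) \<longrightarrow>
      (\<exists>m::nat. m \<ge> 2 \<and> lor e f = - cos (pi / real m) * sqrt (lor e e) * sqrt (lor f f)))"

inductive_set refl_group :: "('a::euclidean_space \<times> real) set \<Rightarrow> (('a \<times> real) \<Rightarrow> ('a \<times> real)) set"
  for E where
  id_in: "id \<in> refl_group E"
| step: "w \<in> refl_group E \<Longrightarrow> e \<in> E \<Longrightarrow> lrefl e \<circ> w \<in> refl_group E"

definition reflections :: "('a::euclidean_space \<times> real) set \<Rightarrow> (('a \<times> real) \<Rightarrow> ('a \<times> real)) set" where
  "reflections E = {w \<circ> lrefl e \<circ> inv w | w e. w \<in> refl_group E \<and> e \<in> E}"

definition fix_hyperplane :: "(('a::euclidean_space \<times> real) \<Rightarrow> ('a \<times> real)) \<Rightarrow> ('a \<times> real) set" where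
  "fix_hyperplane r = {p \<in> hyp. r p = p}"

definition discrete_action :: "(('a::euclidean_space \<times> real) \<Rightarrow> ('a \<times> real)) set \<Rightarrow> bool" where
  "discrete_action W \<longleftrightarrow> (\<forall>K. compact K \<and> K \<subseteq> hyp \<longrightarrow> finite {w\<in>W. w ` K \<inter> K \<noteq> {}})"

definition strict_fundamental_domain ::
  "(('a::euclidean_space \<times> real) \<Rightarrow> ('a \<times> real)) set \<Rightarrow> ('a \<times> real) set \<Rightarrow> bool" where
  "strict_fundamental_domain W P \<longleftrightarrow> P \<subseteq> hyp \<and> (\<forall>p\<in>hyp. \<exists>!q\<in>P. \<exists>w\<in>W. w p = q)"

definition geodesic_ray :: "(real \<Rightarrow> ('a::euclidean_space \<times> real)) \<Rightarrow> bool" where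
  "geodesic_ray \<gamma> \<longleftrightarrow> (\<exists>p u. p \<in> hyp \<and> lor p u = 0 \<and> lor u u = 1 \<and>
       (\<forall>t\<ge>0. \<gamma> t = cosh t *\<^sub>R p + sinh t *\<^sub>R u))"

text \<open>The visual boundary, identified (homeomorphically for the cone topology) with the
  sphere of null vectors with last coordinate 1, with its Euclidean topology.\<close>
definition ideal_boundary :: "('a::euclidean_space \<times> real) set" where
  "ideal_boundary = {v. lor v v = 0 \<and> snd v = 1}"

definition ray_end :: "(real \<Rightarrow> ('a::euclidean_space \<times> real)) \<Rightarrow> ('a \<times> real)" where
  "ray_end \<gamma> = Lim at_top (\<lambda>t. (1 / snd (\<gamma> t)) *\<^sub>R \<gamma> t)"

end

theory Submission
  imports Defs "HOL-Real_Asymp.Real_Asymp"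
begin

text \<open>Write the ideal point as (x, 1) with |x| = 1 and follow the Euclidean radius
  s \<mapsto> (s x, 1), s < 1, of the Klein model towards it. If some wall w H_e meets the radius
  close to x, this wall is a hyperplane section of the Klein ball passing near x, so its sphere at
  infinity contains points near (x, 1). Otherwise the end of the radius stays in one chamber
  inv w ` P, so w (x, 1) is a nonzero null vector of the closed cone of P; such a vector lies on a
  wall, because a null vector inside the cone would have spacelike neighbours in the cone. In
  both cases the ideal point found is the end of a geodesic ray in the wall, obtained by joining
  any point of the wall to it.\<close>

lemma lor_Pair [simp]: "lor (x, s) (y, t) = x \<bullet> y - s * t"
  by (simp add: lor_def)

lemma lor_sym: "lor x y = lor y x"
  by (simp add: lor_def inner_commute mult.commute)

lemma lor_add_left [simp]: "lor (x + y) z = lor x z + lor y z"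
  by (simp add: lor_def inner_add_left algebra_simps)

lemma lor_add_right [simp]: "lor z (x + y) = lor z x + lor z y"
  by (simp add: lor_def inner_add_right algebra_simps)

lemma lor_diff_left [simp]: "lor (x - y) z = lor x z - lor y z"
  by (simp add: lor_def inner_diff_left algebra_simps)

lemma lor_diff_right [simp]: "lor z (x - y) = lor z x - lor z y"
  by (simp add: lor_def inner_diff_right algebra_simps)

lemma lor_scaleR_left [simp]: "lor (c *\<^sub>R x) z = c * lor x z"
  by (simp add: lor_def algebra_simps)

lemma lor_scaleR_right [simp]: "lor z (c *\<^sub>R x) = c * lor z x"
  by (simp add: lor_def algebra_simps)

lemma lor_minus_left [simp]: "lor (- x) z = - lor x z"
  by (simp add: lor_def)

lemma lor_minus_right [simp]: "lor z (- x) = - lor z x"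
  by (simp add: lor_def)

lemma lrefl_lor:
  assumes "lor e e \<noteq> 0"
  shows "lor (lrefl e x) (lrefl e y) = lor x y"
  using assms by (simp add: lrefl_def lor_sym[of x e] lor_sym[of y e] field_simps)

lemma lrefl_lrefl:
  assumes "lor e e \<noteq> 0"
  shows "lrefl e (lrefl e x) = x"
  using assms by (simp add: lrefl_def field_simps)

lemma lrefl_fixpoint: "lor e x = 0 \<Longrightarrow> lrefl e x = x"
  by (simp add: lrefl_def)

lemma inv_lrefl:
  assumes "lor e e \<noteq> 0"
  shows "inv (lrefl e) = lrefl e"
  by (rule inv_unique_comp) (auto simp: lrefl_lrefl[OF assms])

lemma bij_lrefl:
  assumes "lor e e \<noteq> 0"
  shows "bij (lrefl e)"
  by (rule o_bij[of "lrefl e"]) (auto simp: lrefl_lrefl[OF assms])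

lemma refl_group_lor:
  assumes "w \<in> refl_group E" and "\<forall>e\<in>E. lor e e \<noteq> 0"
  shows "lor (w x) (w y) = lor x y"
  using assms(1) by induction (auto simp: lrefl_lor assms(2))

lemma refl_group_bij:
  assumes "w \<in> refl_group E" and "\<forall>e\<in>E. lor e e \<noteq> 0"
  shows "bij w"
  using assms(1)
proof induction
  case id_in
  show ?case by (rule bij_id)
next
  case (step w e)
  then show ?case using assms(2) by (metis bij_comp bij_lrefl)
qed

lemma refl_group_comp_lrefl:
  assumes "w \<in> refl_group E" and "e \<in> E"
  shows "w \<circ> lrefl e \<in> refl_group E"
  using assms(1)
proof induction
  case id_in
  show ?case using refl_group.step[OF refl_group.id_in assms(2)] by (metis comp_id id_comp)
next
  case (step w f)
  then show ?case using refl_group.step[OF step(3) step(2)] by (metis o_assoc)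
qed

lemma refl_group_inv:
  assumes "w \<in> refl_group E" and "\<forall>e\<in>E. lor e e \<noteq> 0"
  shows "inv w \<in> refl_group E"
  using assms(1)
proof induction
  case id_in
  show ?case using refl_group.id_in by (metis inv_id)
next
  case (step w e)
  then have "inv (lrefl e \<circ> w) = inv w \<circ> lrefl e"
    using assms(2) by (simp add: o_inv_distrib bij_lrefl refl_group_bij inv_lrefl)
  then show ?case using refl_group_comp_lrefl[OF step(3) step(2)] by (simp only:)
qed

lemma refl_group_adjoint:
  assumes "w \<in> refl_group E" and "\<forall>e\<in>E. lor e e \<noteq> 0"
  shows "lor (inv w x) y = lor x (w y)"
proof -
  have "w (inv w x) = x"
    using refl_group_bij[OF assms] by (simp add: bij_is_surj surj_f_inv_f)
  then show ?thesis using refl_group_lor[OF assms, of "inv w x" y] by simp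
qed

lemma hyp_norm_less: "v \<in> hyp \<Longrightarrow> norm (fst v) < snd v"
  by (auto simp: hyp_def lor_def dot_square_norm power2_eq_square intro: power2_less_imp_less)

lemma hyp_or_uminus_hyp:
  assumes "lor v v = -1"
  shows "v \<in> hyp \<or> - v \<in> hyp"
proof -
  have "snd v * snd v = fst v \<bullet> fst v + 1" using assms by (simp add: lor_def)
  then have "snd v \<noteq> 0" by (metis inner_ge_zero add_nonneg_pos mult_zero_left zero_less_one less_irrefl)
  then show ?thesis using assms by (auto simp: hyp_def)
qed

lemma scaled_in_hyp:
  assumes "norm y < 1"
  shows "\<exists>k>0. k *\<^sub>R (y, 1) \<in> hyp"
proof -
  define k where "k = 1 / sqrt (1 - y \<bullet> y)"
  have pos: "1 - y \<bullet> y > 0" using assms by (simp add: dot_square_norm abs_square_less_1)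
  then have "k * k * (y \<bullet> y - 1) = -1" by (simp add: k_def field_simps)
  then have "lor (k *\<^sub>R (y, 1)) (k *\<^sub>R (y, 1)) = -1" by (simp add: algebra_simps)
  moreover have "k > 0" using pos by (simp add: k_def)
  ultimately show ?thesis by (auto simp: hyp_def)
qed

lemma ideal_boundary_iff: "l \<in> ideal_boundary \<longleftrightarrow> (\<exists>z. norm z = 1 \<and> l = (z, 1))"
  by (cases l) (auto simp: ideal_boundary_def norm_eq_1)

lemma ray_end_towards:
  assumes "\<alpha> > 0" and "snd l = 1"
  shows "ray_end (\<lambda>t. cosh t *\<^sub>R v + sinh t *\<^sub>R ((1 / \<alpha>) *\<^sub>R l - v)) = l"
proof -
  define \<gamma> where "\<gamma> = (\<lambda>t. cosh t *\<^sub>R v + sinh t *\<^sub>R ((1 / \<alpha>) *\<^sub>R l - v))"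
  define k where "k t = \<alpha> * (exp (- t) / sinh t)" for t :: real
  have k: "(k \<longlongrightarrow> 0) at_top"
    unfolding k_def by (rule tendsto_mult_right_zero) real_asymp
  have "eventually (\<lambda>t. (1 / (k t * snd v + 1)) *\<^sub>R (k t *\<^sub>R v + l) = (1 / snd (\<gamma> t)) *\<^sub>R \<gamma> t) at_top"
    using eventually_gt_at_top[of 0]
  proof eventually_elim
    case (elim t)
    then have "sinh t > 0" by simp
    have "\<gamma> t = (cosh t - sinh t) *\<^sub>R v + (sinh t / \<alpha>) *\<^sub>R l"
      unfolding \<gamma>_def by (simp add: algebra_simps)
    also have "\<dots> = (sinh t / \<alpha>) *\<^sub>R (k t *\<^sub>R v + l)"
      using \<open>sinh t > 0\<close> assms(1) by (simp add: cosh_minus_sinh k_def scaleR_add_right)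
    finally show ?case using \<open>sinh t > 0\<close> assms by simp
  qed
  moreover have "((\<lambda>t. (1 / (k t * snd v + 1)) *\<^sub>R (k t *\<^sub>R v + l))
      \<longlongrightarrow> (1 / (0 * snd v + 1)) *\<^sub>R (0 *\<^sub>R v + l)) at_top"
    by (intro tendsto_intros k) auto
  ultimately have "((\<lambda>t. (1 / snd (\<gamma> t)) *\<^sub>R \<gamma> t) \<longlongrightarrow> l) at_top"
    by (simp add: Lim_transform_eventually)
  then show ?thesis unfolding ray_end_def \<gamma>_def by (intro tendsto_Lim) auto
qed

lemma geodesic_ray_to_ideal_point:
  assumes v: "v \<in> hyp" and l: "l \<in> ideal_boundary"
  obtains \<gamma> where "geodesic_ray \<gamma>" and "ray_end \<gamma> = l"
    and "\<forall>t\<ge>0. \<gamma> t \<in> hyp \<and> (\<exists>a b. \<gamma> t = a *\<^sub>R v + b *\<^sub>R l)"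
proof
  obtain z where z: "norm z = 1" "l = (z, 1)" using l ideal_boundary_iff by blast
  have vv: "lor v v = -1" "snd v > 0" using v by (auto simp: hyp_def)
  have "fst v \<bullet> z < snd v"
    using norm_cauchy_schwarz[of "fst v" z] hyp_norm_less[OF v] z(1) by simp
  then have "lor v l < 0" by (cases v) (simp add: z(2))
  define \<alpha> where "\<alpha> = - lor v l"
  have \<alpha>: "\<alpha> > 0" using \<open>lor v l < 0\<close> by (simp add: \<alpha>_def)
  have ll: "lor l l = 0" "snd l = 1" using z by (simp_all add: dot_square_norm)
  define u where "u = (1 / \<alpha>) *\<^sub>R l - v"
  define \<gamma> where "\<gamma> = (\<lambda>t::real. cosh t *\<^sub>R v + sinh t *\<^sub>R u)"
  have vu: "lor v u = 0" using \<alpha> vv unfolding u_def \<alpha>_def by simp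
  have uu: "lor u u = 1" using \<alpha> vv ll unfolding u_def \<alpha>_def by (simp add: lor_sym[of l v] field_simps)
  show "geodesic_ray \<gamma>" unfolding geodesic_ray_def \<gamma>_def using v vu uu by blast
  show "ray_end \<gamma> = l" unfolding \<gamma>_def u_def by (rule ray_end_towards[OF \<alpha> ll(2)])
  show "\<forall>t\<ge>0. \<gamma> t \<in> hyp \<and> (\<exists>a b. \<gamma> t = a *\<^sub>R v + b *\<^sub>R l)"
  proof (intro allI impI conjI)
    fix t :: real assume "t \<ge> 0"
    have "lor (\<gamma> t) (\<gamma> t) = (sinh t)\<^sup>2 - (cosh t)\<^sup>2"
      unfolding \<gamma>_def using vv vu uu by (simp add: lor_sym[of u v] power2_eq_square algebra_simps)
    moreover have "snd (\<gamma> t) = (cosh t - sinh t) * snd v + sinh t / \<alpha>"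
      unfolding \<gamma>_def u_def using ll by (simp add: algebra_simps)
    moreover have "(cosh t - sinh t) * snd v + sinh t / \<alpha> > 0"
      using vv(2) \<alpha> \<open>t \<ge> 0\<close> by (simp add: cosh_minus_sinh add_pos_nonneg)
    ultimately show "\<gamma> t \<in> hyp" by (simp add: hyp_def cosh_square_eq)
    show "\<exists>a b. \<gamma> t = a *\<^sub>R v + b *\<^sub>R l"
      by (rule exI[of _ "cosh t - sinh t"], rule exI[of _ "sinh t / \<alpha>"])
        (simp add: \<gamma>_def u_def algebra_simps)
  qed
qed

definition wall_ray_ends :: "('a::euclidean_space \<times> real) set \<Rightarrow> ('a \<times> real) set" where
  "wall_ray_ends E = {ray_end \<gamma> | \<gamma> r. r \<in> reflections E \<and> geodesic_ray \<gamma> \<and>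
                                        (\<forall>t\<ge>0. \<gamma> t \<in> fix_hyperplane r)}"

lemma fix_hyperplane_conjugate:
  assumes "w \<in> refl_group E" and "\<forall>e\<in>E. lor e e \<noteq> 0"
    and "p \<in> hyp" and "lor (w e) p = 0"
  shows "p \<in> fix_hyperplane (w \<circ> lrefl e \<circ> inv w)"
proof -
  have wp: "w (inv w p) = p"
    using refl_group_bij[OF assms(1,2)] by (simp add: bij_is_surj surj_f_inv_f)
  then have "lor e (inv w p) = 0" using assms(4) refl_group_lor[OF assms(1,2)] by metis
  then show ?thesis using assms(3) wp by (simp add: fix_hyperplane_def lrefl_fixpoint)
qed

lemma wall_ideal_point_in_wall_ray_ends:
  assumes E: "polytope_normals E" and w: "w \<in> refl_group E" and e: "e \<in> E"
    and l: "l \<in> ideal_boundary" and wel: "lor (w e) l = 0"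
  shows "l \<in> wall_ray_ends E"
proof -
  have nondeg: "\<forall>e\<in>E. lor e e \<noteq> 0" using E by (auto simp: polytope_normals_def)
  obtain p where p: "p \<in> hyp" "lor e p = 0" using E e by (auto simp: polytope_normals_def)
  have "lor (w p) (w p) = -1" and "lor (w e) (w p) = 0"
    using p refl_group_lor[OF w nondeg] by (simp_all add: hyp_def)
  \<comment> \<open>w p may lie on the lower sheet; then - w p is a point of the wall in hyp\<close>
  then obtain v where v: "v \<in> hyp" "lor (w e) v = 0"
    using hyp_or_uminus_hyp[of "w p"] by (metis lor_minus_right neg_0_equal_iff_equal)
  obtain \<gamma> where \<gamma>: "geodesic_ray \<gamma>" "ray_end \<gamma> = l"
    and on_plane: "\<forall>t\<ge>0. \<gamma> t \<in> hyp \<and> (\<exists>a b. \<gamma> t = a *\<^sub>R v + b *\<^sub>R l)"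
    using geodesic_ray_to_ideal_point[OF v(1) l] by blast
  have "\<gamma> t \<in> fix_hyperplane (w \<circ> lrefl e \<circ> inv w)" if "t \<ge> 0" for t
    using on_plane that v(2) wel by (auto intro!: fix_hyperplane_conjugate[OF w nondeg])
  moreover have "w \<circ> lrefl e \<circ> inv w \<in> reflections E"
    unfolding reflections_def using w e by blast
  ultimately show ?thesis unfolding wall_ray_ends_def using \<gamma> by blast
qed

lemma unit_sphere_point_in_hyperplane_near:
  fixes a y :: "'a::euclidean_space"
  assumes "DIM('a) \<ge> 2" and "norm y < 1"
  shows "\<exists>z. norm z = 1 \<and> a \<bullet> z = a \<bullet> y \<and> (norm (z - y))\<^sup>2 \<le> 1 - (norm y)\<^sup>2"
proof -
  obtain t where t: "norm t = 1" "a \<bullet> t = 0" "t \<bullet> y \<ge> 0"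
  proof -
    obtain t0 where "t0 \<noteq> 0" "orthogonal a t0"
      using orthogonal_to_vector_exists[OF assms(1)] by blast
    then have "norm (sgn t0) = 1" "a \<bullet> sgn t0 = 0"
      by (simp_all add: norm_sgn orthogonal_def sgn_div_norm)
    then show ?thesis
      using that[of "sgn t0"] that[of "- sgn t0"] by (cases "sgn t0 \<bullet> y \<ge> 0") auto
  qed
  define b where "b = t \<bullet> y"
  define q where "q = 1 - (norm y)\<^sup>2"
  define r where "r = sqrt (b\<^sup>2 + q) - b"
  have "q > 0" using assms(2) by (simp add: q_def abs_square_less_1)
  have "sqrt (b\<^sup>2 + q) \<ge> b" using \<open>q > 0\<close> by (simp add: real_le_rsqrt)
  then have "r \<ge> 0" by (simp add: r_def)
  have "(r + b)\<^sup>2 = b\<^sup>2 + q" using \<open>q > 0\<close> by (simp add: r_def add_pos_nonneg)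
  then have r: "r\<^sup>2 + 2 * b * r = q" by (simp add: power2_eq_square algebra_simps)
  have tt: "t \<bullet> t = 1" using t(1) by (simp add: norm_eq_1)
  have "(y + r *\<^sub>R t) \<bullet> (y + r *\<^sub>R t) = y \<bullet> y + (r\<^sup>2 + 2 * b * r)"
    by (simp add: inner_add_left inner_add_right inner_commute tt b_def power2_eq_square)
  then have "norm (y + r *\<^sub>R t) = 1" using r by (simp add: q_def norm_eq_1 dot_square_norm)
  moreover have "2 * b * r \<ge> 0" using \<open>r \<ge> 0\<close> t(3) by (simp add: b_def)
  then have "(norm (r *\<^sub>R t))\<^sup>2 \<le> q" using r t(1) by simp
  ultimately show ?thesis
    by (intro exI[of _ "y + r *\<^sub>R t"]) (simp add: q_def t(2) inner_add_right)
qed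

lemma affine_nonpos_without_root:
  fixes A B a b :: real
  assumes "a \<le> b" and "A * a + B < 0" and "\<forall>s. a \<le> s \<and> s < b \<longrightarrow> A * s + B \<noteq> 0"
  shows "A * b + B \<le> 0"
proof (rule ccontr)
  assume "\<not> A * b + B \<le> 0"
  then have "A * (b - a) > 0" using assms(2) by (simp add: algebra_simps)
  then have "A > 0" using assms(1) by (simp add: zero_less_mult_iff)
  then have "A * (- B / A) + B = 0" and "a \<le> - B / A" and "- B / A < b"
    using assms(2) \<open>\<not> A * b + B \<le> 0\<close> by (simp_all add: field_simps)
  then show False using assms(3) by blast
qed

lemma null_vector_in_cone_on_wall:
  assumes "finite E" and cone: "{v. \<forall>e\<in>E. lor e v \<le> 0} - {0} \<subseteq> {v. lor v v \<le> 0 \<and> snd v > 0}"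
    and "\<forall>e\<in>E. lor e c \<le> 0" and "c \<noteq> 0" and "lor c c = 0"
  shows "\<exists>e\<in>E. lor e c = 0"
proof (rule ccontr)
  assume "\<not> (\<exists>e\<in>E. lor e c = 0)"
  then have inside: "\<forall>e\<in>E. lor e c < 0" using assms(3) by force
  \<comment> \<open>m pairs positively with c, so c + t m is spacelike for small t > 0\<close>
  define m where "m = (fst c, - snd c)"
  have "lor c m = fst c \<bullet> fst c + snd c * snd c" by (simp add: m_def lor_def)
  moreover have "fst c \<noteq> 0 \<or> snd c \<noteq> 0" using assms(4) by (simp add: prod_eq_iff)
  then have "fst c \<bullet> fst c > 0 \<or> snd c * snd c > 0"
    by (metis inner_gt_zero_iff not_real_square_gt_zero)
  ultimately have cm: "lor c m > 0" by (smt (verit) inner_ge_zero zero_le_square)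
  have "eventually (\<lambda>t. lor e (c + t *\<^sub>R m) < 0) (at_right 0)" if "e \<in> E" for e
  proof -
    have "((\<lambda>t. lor e c + t * lor e m) \<longlongrightarrow> lor e c + 0 * lor e m) (at_right 0)"
      by (intro tendsto_intros)
    then show ?thesis using inside that by (auto dest: order_tendstoD(2))
  qed
  then have walls: "eventually (\<lambda>t. \<forall>e\<in>E. lor e (c + t *\<^sub>R m) < 0) (at_right 0)"
    by (simp add: eventually_ball_finite assms(1))
  have "((\<lambda>t. 2 * lor c m + t * lor m m) \<longlongrightarrow> 2 * lor c m + 0 * lor m m) (at_right 0)"
    by (intro tendsto_intros)
  from order_tendstoD(1)[OF this, of 0]
  have spacelike: "eventually (\<lambda>t. 2 * lor c m + t * lor m m > 0) (at_right 0)" using cm by simp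
  have "eventually (\<lambda>t. t > 0) (at_right (0::real))"
    by (simp add: eventually_at_right_less)
  with walls spacelike have "eventually (\<lambda>t. (\<forall>e\<in>E. lor e (c + t *\<^sub>R m) < 0) \<and>
      2 * lor c m + t * lor m m > 0 \<and> t > 0) (at_right 0)"
    by eventually_elim blast
  then obtain t :: real where t: "\<forall>e\<in>E. lor e (c + t *\<^sub>R m) < 0"
    and "2 * lor c m + t * lor m m > 0" and "t > 0"
    using eventually_happens'[OF trivial_limit_at_right_real] by blast
  moreover have "lor (c + t *\<^sub>R m) (c + t *\<^sub>R m) = t * (2 * lor c m + t * lor m m)"
    using assms(5) by (simp add: lor_sym[of m c] algebra_simps)
  ultimately have "lor (c + t *\<^sub>R m) (c + t *\<^sub>R m) > 0" by simp
  moreover have "lor (c + t *\<^sub>R m) (c + t *\<^sub>R m) \<le> 0"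
  proof (cases "c + t *\<^sub>R m = 0")
    case False
    then have "c + t *\<^sub>R m \<in> {v. \<forall>e\<in>E. lor e v \<le> 0} - {0}" using t by (simp add: less_imp_le)
    then show ?thesis using cone by blast
  qed (simp add: lor_def)
  ultimately show False by simp
qed

lemma wall_ray_end_near_radial_wall_point:
  fixes x0 :: "'a::euclidean_space"
  assumes "DIM('a) \<ge> 2" and E: "polytope_normals E" and w: "w \<in> refl_group E" and e: "e \<in> E"
    and x0: "norm x0 = 1" and s: "0 \<le> s" "s < 1" and wall: "lor (w e) (s *\<^sub>R x0, 1) = 0"
  shows "\<exists>l\<in>wall_ray_ends E. dist l (x0, 1) \<le> (1 - s) + sqrt (2 * (1 - s))"
proof -
  have "norm (s *\<^sub>R x0) < 1" using x0 s by simp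
  then obtain z where z: "norm z = 1" "fst (w e) \<bullet> z = fst (w e) \<bullet> (s *\<^sub>R x0)"
    and near: "(norm (z - s *\<^sub>R x0))\<^sup>2 \<le> 1 - (norm (s *\<^sub>R x0))\<^sup>2"
    using unit_sphere_point_in_hyperplane_near[OF assms(1)] by blast
  have "(z, 1) \<in> ideal_boundary" using z(1) ideal_boundary_iff by blast
  moreover have "lor (w e) (z, 1) = 0" using wall z(2) by (simp add: lor_def)
  ultimately have "(z, 1) \<in> wall_ray_ends E" by (rule wall_ideal_point_in_wall_ray_ends[OF E w e])
  have "1 - s\<^sup>2 \<le> 2 * (1 - s)"
    using zero_le_power2[of "1 - s"] by (simp add: power2_eq_square algebra_simps)
  then have "(norm (z - s *\<^sub>R x0))\<^sup>2 \<le> 2 * (1 - s)" using near x0 s by simp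
  then have "norm (z - s *\<^sub>R x0) \<le> sqrt (2 * (1 - s))" by (simp add: real_le_rsqrt)
  moreover have "norm (s *\<^sub>R x0 - x0) = 1 - s"
    using x0 s by (simp add: scaleR_diff_left[of s 1, simplified, symmetric])
  moreover have "dist (z, 1::real) (x0, 1) \<le> norm (z - s *\<^sub>R x0) + norm (s *\<^sub>R x0 - x0)"
    using norm_triangle_ineq[of "z - s *\<^sub>R x0" "s *\<^sub>R x0 - x0"] by (simp add: dist_Pair_Pair dist_norm)
  ultimately show ?thesis using \<open>(z, 1) \<in> wall_ray_ends E\<close> by force
qed

lemma radius_avoiding_walls_ends_in_wall_ray_ends:
  fixes x0 :: "'a::euclidean_space"
  assumes E: "polytope_normals E" and P: "strict_fundamental_domain (refl_group E) (polyhedron E)"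
    and x0: "norm x0 = 1" and s0: "0 \<le> s0" "s0 < 1"
    and avoid: "\<forall>s w e. s0 \<le> s \<and> s < 1 \<and> w \<in> refl_group E \<and> e \<in> E \<longrightarrow> lor (w e) (s *\<^sub>R x0, 1) \<noteq> 0"
  shows "(x0, 1) \<in> wall_ray_ends E"
proof -
  have nondeg: "\<forall>e\<in>E. lor e e \<noteq> 0" and "finite E"
    and cone: "{v. \<forall>e\<in>E. lor e v \<le> 0} - {0} \<subseteq> {v. lor v v \<le> 0 \<and> snd v > 0}"
    using E by (auto simp: polytope_normals_def)
  obtain k where k: "k > 0" "k *\<^sub>R (s0 *\<^sub>R x0, 1) \<in> hyp"
    using scaled_in_hyp[of "s0 *\<^sub>R x0"] x0 s0 by auto
  define p where "p = k *\<^sub>R (s0 *\<^sub>R x0, 1::real)"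
  obtain w where w: "w \<in> refl_group E" and in_P: "w p \<in> polyhedron E"
    using P k(2) unfolding strict_fundamental_domain_def p_def by blast
  have w': "inv w \<in> refl_group E" by (rule refl_group_inv[OF w nondeg])
  have affine: "lor n (s *\<^sub>R x0, 1) = lor n (x0, 0) * s + lor n (0, 1)" for n s
    by (simp add: lor_def)
  have "lor e (w (x0, 1)) \<le> 0" if e: "e \<in> E" for e
  proof -
    have "lor (inv w e) p \<le> 0"
      using in_P e refl_group_adjoint[OF w nondeg] by (simp add: polyhedron_def)
    then have "k * lor (inv w e) (s0 *\<^sub>R x0, 1) \<le> 0" by (simp only: p_def lor_scaleR_right)
    moreover have "lor (inv w e) (s0 *\<^sub>R x0, 1) \<noteq> 0" using avoid w' e s0 by blast
    ultimately have "lor (inv w e) (s0 *\<^sub>R x0, 1) < 0" using k(1) by (simp add: mult_le_0_iff)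
    moreover have "\<forall>s. s0 \<le> s \<and> s < 1 \<longrightarrow> lor (inv w e) (x0, 0) * s + lor (inv w e) (0, 1) \<noteq> 0"
      unfolding affine[symmetric] using avoid w' e by blast
    ultimately have "lor (inv w e) (x0, 0) * 1 + lor (inv w e) (0, 1) \<le> 0"
      using s0 by (intro affine_nonpos_without_root) (simp_all add: affine)
    then have "lor (inv w e) (x0, 1) \<le> 0" using affine[of "inv w e" 1] by simp
    then show ?thesis using refl_group_adjoint[OF w nondeg] by simp
  qed
  moreover have "w (x0, 1) \<noteq> 0"
  proof
    assume "w (x0, 1) = 0"
    then have "lor (x0, 1) (0, 1) = 0" using refl_group_lor[OF w nondeg] by (metis lor_scaleR_left mult_zero_left scale_zero_left)
    then show False by simp
  qed
  moreover have "lor (w (x0, 1)) (w (x0, 1)) = 0"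
    using x0 refl_group_lor[OF w nondeg] by (simp add: dot_square_norm)
  ultimately obtain e where "e \<in> E" "lor e (w (x0, 1)) = 0"
    using null_vector_in_cone_on_wall[OF \<open>finite E\<close> cone] by blast
  moreover have "(x0, 1) \<in> ideal_boundary" using x0 ideal_boundary_iff by blast
  ultimately show ?thesis
    using wall_ideal_point_in_wall_ray_ends[OF E w'] refl_group_adjoint[OF w nondeg] by simp
qed

lemma ideal_point_near_wall_ray_ends:
  fixes x0 :: "'a::euclidean_space"
  assumes "DIM('a) \<ge> 2" and "polytope_normals E"
    and "strict_fundamental_domain (refl_group E) (polyhedron E)"
    and x0: "norm x0 = 1" and \<delta>: "0 < \<delta>" "\<delta> \<le> 1"
  shows "\<exists>l\<in>wall_ray_ends E. dist l (x0, 1) \<le> \<delta> + sqrt (2 * \<delta>)"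
proof (cases "\<exists>s w e. 1 - \<delta> \<le> s \<and> s < 1 \<and> w \<in> refl_group E \<and> e \<in> E \<and> lor (w e) (s *\<^sub>R x0, 1) = 0")
  case True
  then obtain s w e where s: "1 - \<delta> \<le> s" "s < 1" and w: "w \<in> refl_group E" and e: "e \<in> E"
    and wall: "lor (w e) (s *\<^sub>R x0, 1) = 0" by blast
  have "0 \<le> s" using s \<delta> by simp
  then obtain l where "l \<in> wall_ray_ends E" and "dist l (x0, 1) \<le> (1 - s) + sqrt (2 * (1 - s))"
    using wall_ray_end_near_radial_wall_point[OF assms(1,2) w e x0 _ s(2) wall] by blast
  moreover have "(1 - s) + sqrt (2 * (1 - s)) \<le> \<delta> + sqrt (2 * \<delta>)"
    using s by (intro add_mono real_sqrt_le_mono) auto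
  ultimately show ?thesis by force
next
  case False
  then have "(x0, 1) \<in> wall_ray_ends E"
    using radius_avoiding_walls_ends_in_wall_ray_ends[OF assms(2,3) x0, of "1 - \<delta>"] \<delta> by auto
  then show ?thesis using \<delta> by force
qed

theorem mainTheorem10:
  fixes E :: "('a::euclidean_space \<times> real) set"
  assumes "DIM('a) \<ge> 2"
    and "polytope_normals E"
    and "coxeter_angles E"
    and "discrete_action (refl_group E)"
    and "strict_fundamental_domain (refl_group E) (polyhedron E)"
  shows "ideal_boundary \<subseteq>
    closure {ray_end \<gamma> | \<gamma> r. r \<in> reflections E \<and> geodesic_ray \<gamma> \<and>
                            (\<forall>t\<ge>0. \<gamma> t \<in> fix_hyperplane r)}"
proof -
  have "(x0, 1) \<in> closure (wall_ray_ends E)" if x0: "norm x0 = 1" for x0 :: 'a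
    unfolding closure_approachable
  proof (intro allI impI)
    fix \<epsilon> :: real assume "\<epsilon> > 0"
    have "((\<lambda>\<delta>. \<delta> + sqrt (2 * \<delta>)) \<longlongrightarrow> 0 + sqrt (2 * 0)) (at_right 0)"
      by (intro tendsto_intros)
    then have "eventually (\<lambda>\<delta>. \<delta> + sqrt (2 * \<delta>) < \<epsilon>) (at_right 0)"
      using \<open>\<epsilon> > 0\<close> by (simp add: order_tendstoD(2))
    moreover have "eventually (\<lambda>\<delta>. 0 < \<delta> \<and> \<delta> \<le> (1::real)) (at_right 0)"
      using eventually_at_right_real[OF zero_less_one] by eventually_elim auto
    ultimately obtain \<delta> where "\<delta> + sqrt (2 * \<delta>) < \<epsilon>" "0 < \<delta>" "\<delta> \<le> 1"
      using eventually_happens'[OF trivial_limit_at_right_real] eventually_conj by blast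
    moreover obtain l where "l \<in> wall_ray_ends E" "dist l (x0, 1) \<le> \<delta> + sqrt (2 * \<delta>)"
      using ideal_point_near_wall_ray_ends[OF assms(1,2,5) x0 \<open>0 < \<delta>\<close> \<open>\<delta> \<le> 1\<close>] by blast
    ultimately show "\<exists>l\<in>wall_ray_ends E. dist l (x0, 1) < \<epsilon>" by force
  qed
  then show ?thesis unfolding wall_ray_ends_def[symmetric] by (auto simp: ideal_boundary_iff)
qed

end
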